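(* Let $0\le c\le (3-\sqrt5)/4$. For every graphon $W$, $$m_D(W)-\tfrac1{16}\ \ge\ c\left(m_{C_4}(W)-\tfrac18\right),$$ where $D=K_{1,1,2}$ is the diamond (the $4$-cycle plus one diagonal).
   Context: For a graph $H$ and a graphon $W$ (a measurable symmetric function $W:[0,1]^2\to[0,1]$), let $t_H(W)=\int_{[0,1]^{V(H)}}\prod_{uv\in E(H)}W(x_u,x_v)\,dx$ and $m_H(W)=t_H(W)+t_H(1-W)$. *)

theory Defs
  imports "HOL-Analysis.Analysis"
begin

text \<open>A graphon: a measurable symmetric function on the unit square with values in [0,1].
  We represent it as a function real => real => real and only constrain it on [0,1]^2.\<close>
definition graphon :: "(real \<Rightarrow> real \<Rightarrow> real) \<Rightarrow> bool" where
  "graphon W \<longleftrightarrow>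
     (\<lambda>(x, y). W x y) \<in> borel_measurable (restrict_space lborel {0..1::real} \<Otimes>\<^sub>M restrict_space lborel {0..1::real}) \<and>
     (\<forall>x\<in>{0..1}. \<forall>y\<in>{0..1}. W x y = W y x) \<and>
     (\<forall>x\<in>{0..1}. \<forall>y\<in>{0..1}. 0 \<le> W x y \<and> W x y \<le> 1)"

definition unit_meas :: "real measure" where
  "unit_meas = restrict_space lborel {0..1}"

text \<open>A finite graph H with vertex set {0..<n} and edge set E (each edge listed once
  as a pair). Homomorphism density t_H(W).\<close>
definition hom_density :: "nat \<Rightarrow> (nat \<times> nat) set \<Rightarrow> (real \<Rightarrow> real \<Rightarrow> real) \<Rightarrow> real" where
  "hom_density n E W =
     integral\<^sup>L (PiM {..<n} (\<lambda>_. unit_meas)) (\<lambda>x. \<Prod>(u, v)\<in>E. W (x u) (x v))"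

definition m_density :: "nat \<Rightarrow> (nat \<times> nat) set \<Rightarrow> (real \<Rightarrow> real \<Rightarrow> real) \<Rightarrow> real" where
  "m_density n E W = hom_density n E W + hom_density n E (\<lambda>x y. 1 - W x y)"

definition C4_edges :: "(nat \<times> nat) set" where
  "C4_edges = {(0,1), (1,2), (2,3), (0,3)}"

definition diamond_edges :: "(nat \<times> nat) set" where
  "diamond_edges = {(0,1), (1,2), (2,3), (0,3), (0,2)}"

end

theory Submission
  imports Defs "HOL-Probability.Probability"
begin

(*
  Write U = 2 W - 1.  Expanding the products over the edges, m_H(W) is 2^(1 - e(H)) times the sum
  of t_F(U) over the subgraphs F of H with an even number of edges.  Up to isomorphism this gives
  16 (m_D - 1/16) = 8 P + 2 E + Q + 4 T and 8 (m_C4 - 1/8) = 4 P + 2 E + Q, where P, E, Q, T are the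
  densities in U of the cherry, the matching, the 4-cycle and the paw.  Integrating out two
  vertices shows that P and E are integrals of squares, that R = t(U01^2 U02 U03) is at most P since
  |U| <= 1, and that s^2 Q + 4 s T + 4 R >= 0, being the integral over (a, b) of the square of
  the integral over y of s U(a,y) U(b,y) + 2 U(a,b) U(a,y).  With s = 1 - 2c what remains is the
  coefficient 4 (4c^2 - 6c + 1) of P, nonnegative exactly for c <= (3 - sqrt 5)/4.
*)

lemma prob_space_unit_meas: "prob_space unit_meas"
  unfolding unit_meas_def by (rule prob_space_restrict_space) auto

lemma space_unit_meas [simp]: "space unit_meas = {0..1}"
  by (simp add: unit_meas_def space_restrict_space)

abbreviation unit_cube :: "nat \<Rightarrow> (nat \<Rightarrow> real) measure" where
  "unit_cube n \<equiv> PiM {..<n} (\<lambda>_. unit_meas)"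

lemma prob_space_unit_cube: "prob_space (unit_cube n)"
  by (intro prob_space_PiM prob_space_unit_meas)

lemma finite_measure_unit_meas: "finite_measure unit_meas"
  using prob_space_unit_meas prob_space_def by blast

lemma finite_measure_unit_cube: "finite_measure (unit_cube n)"
  using prob_space_unit_cube prob_space_def by blast

interpretation unit_meas: product_sigma_finite "\<lambda>_::nat. unit_meas"
  unfolding product_sigma_finite_def
  using prob_space_unit_meas by (auto simp: prob_space_imp_sigma_finite)

lemma integral_PiM_relabel:
  fixes f :: "(nat \<Rightarrow> 'a) \<Rightarrow> real"
  assumes M: "prob_space M" and xs: "distinct xs" "set xs = {..<n}"
    and f: "f \<in> borel_measurable (PiM {..<n} (\<lambda>_. M))"
  shows "(\<integral>x. f (\<lambda>i\<in>{..<n}. x (xs ! i)) \<partial>PiM {..<n} (\<lambda>_. M)) = integral\<^sup>L (PiM {..<n} (\<lambda>_. M)) f"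
proof -
  have bij: "bij_betw ((!) xs) {..<n} {..<n}"
    using bij_betw_nth[OF xs(1)] xs distinct_card[OF xs(1)] by fastforce
  have relabel_measurable: "(\<lambda>x. \<lambda>i\<in>{..<n}. x (xs ! i)) \<in> measurable (PiM {..<n} (\<lambda>_. M)) (PiM {..<n} (\<lambda>_. M))"
    using bij by (auto intro!: measurable_restrict measurable_component_singleton simp: bij_betw_def)
  have "distr (PiM {..<n} (\<lambda>_. M)) (PiM {..<n} (\<lambda>_. M)) (\<lambda>x. \<lambda>i\<in>{..<n}. x (xs ! i)) = PiM {..<n} (\<lambda>_. M)"
    using distr_PiM_reindex[of "{..<n}" "\<lambda>_. M" "(!) xs" "{..<n}"] M bij by (auto simp: bij_betw_def)
  then show ?thesis
    using integral_distr[OF relabel_measurable f] by simp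
qed

definition bounded_measurable :: "'a measure \<Rightarrow> ('a \<Rightarrow> real) \<Rightarrow> bool" where
  "bounded_measurable M f \<longleftrightarrow> f \<in> borel_measurable M \<and> (\<exists>B. \<forall>x\<in>space M. \<bar>f x\<bar> \<le> B)"

lemma bounded_measurable_const [simp]: "bounded_measurable M (\<lambda>x. c)"
  unfolding bounded_measurable_def by auto

lemma bounded_measurable_add [simp]:
  "bounded_measurable M f \<Longrightarrow> bounded_measurable M g \<Longrightarrow> bounded_measurable M (\<lambda>x. f x + g x)"
  unfolding bounded_measurable_def by (fastforce intro: abs_triangle_ineq[THEN order_trans] add_mono)

lemma bounded_measurable_diff [simp]:
  "bounded_measurable M f \<Longrightarrow> bounded_measurable M g \<Longrightarrow> bounded_measurable M (\<lambda>x. f x - g x)"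
  unfolding bounded_measurable_def by (fastforce intro: abs_triangle_ineq4[THEN order_trans] add_mono)

lemma bounded_measurable_mult [simp]:
  "bounded_measurable M f \<Longrightarrow> bounded_measurable M g \<Longrightarrow> bounded_measurable M (\<lambda>x. f x * g x)"
  unfolding bounded_measurable_def abs_mult by (fastforce intro: mult_mono)

lemma bounded_measurable_prod [simp]:
  "(\<And>i. i \<in> S \<Longrightarrow> bounded_measurable M (f i)) \<Longrightarrow> bounded_measurable M (\<lambda>x. \<Prod>i\<in>S. f i x)"
  by (induction S rule: infinite_finite_induct) simp_all

lemma integrable_bounded_measurable:
  "finite_measure M \<Longrightarrow> bounded_measurable M f \<Longrightarrow> integrable M f"
  unfolding bounded_measurable_def
  by (metis AE_I2 finite_measure.integrable_const_bound real_norm_def)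

lemma integrable_unit_cube [simp]: "bounded_measurable (unit_cube n) f \<Longrightarrow> integrable (unit_cube n) f"
  by (rule integrable_bounded_measurable[OF finite_measure_unit_cube])

lemma prod_list_one_plus_mult:
  fixes t :: "'b::comm_ring_1"
  shows "(\<Prod>e\<leftarrow>es. 1 + t * u e) = (\<Sum>fs\<leftarrow>List.subseqs es. t ^ length fs * (\<Prod>e\<leftarrow>fs. u e))"
  by (induction es) (simp_all add: Let_def o_def sum_list_const_mult algebra_simps)

lemma prod_list_one_plus_add_one_minus:
  fixes u :: "'a \<Rightarrow> 'b::comm_ring_1"
  shows "(\<Prod>e\<leftarrow>es. 1 + u e) + (\<Prod>e\<leftarrow>es. 1 - u e)
    = 2 * (\<Sum>fs\<leftarrow>filter (even \<circ> length) (List.subseqs es). \<Prod>e\<leftarrow>fs. u e)"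
proof -
  have "p + (-1) ^ k * p = 2 * (if even k then p else 0)" for p :: 'b and k :: nat
    by simp
  then show ?thesis
    using prod_list_one_plus_mult[of 1 u es] prod_list_one_plus_mult[of "-1" u es]
    by (simp add: sum_list_map_filter' sum_list_addf[symmetric] sum_list_const_mult[symmetric] o_def)
qed

lemma integral_unit_cube_fibre:
  fixes h :: "real \<Rightarrow> real \<Rightarrow> real" and G H :: "real \<Rightarrow> real \<Rightarrow> real \<Rightarrow> real"
  assumes int: "integrable (unit_cube 4) (\<lambda>x. h (x 0) (x 1) * G (x 0) (x 1) (x 2) * H (x 0) (x 1) (x 3))"
    and sections: "\<And>a b. a \<in> {0..1} \<Longrightarrow> b \<in> {0..1} \<Longrightarrow> integrable unit_meas (G a b) \<and> integrable unit_meas (H a b)"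
  shows "(\<integral>x. h (x 0) (x 1) * G (x 0) (x 1) (x 2) * H (x 0) (x 1) (x 3) \<partial>unit_cube 4)
    = (\<integral>x. h (x 0) (x 1) * integral\<^sup>L unit_meas (G (x 0) (x 1)) * integral\<^sup>L unit_meas (H (x 0) (x 1))
        \<partial>PiM {0::nat, 1} (\<lambda>_. unit_meas))"
proof -
  let ?F = "\<lambda>x::nat \<Rightarrow> real. h (x 0) (x 1) * G (x 0) (x 1) (x 2) * H (x 0) (x 1) (x 3)"
  have split: "{..<4::nat} = {0, 1} \<union> {2, 3}"
    by auto
  have "integral\<^sup>L (unit_cube 4) ?F
      = (\<integral>x. (\<integral>y. ?F (merge {0, 1} {2, 3} (x, y)) \<partial>PiM {2, 3} (\<lambda>_. unit_meas)) \<partial>PiM {0, 1} (\<lambda>_. unit_meas))"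
    unfolding split using int split by (intro unit_meas.product_integral_fold) auto
  also have "\<dots> = (\<integral>x. h (x 0) (x 1) * integral\<^sup>L unit_meas (G (x 0) (x 1)) * integral\<^sup>L unit_meas (H (x 0) (x 1))
        \<partial>PiM {0::nat, 1} (\<lambda>_. unit_meas))"
  proof (rule Bochner_Integration.integral_cong[OF refl])
    fix x assume "x \<in> space (PiM {0::nat, 1} (\<lambda>_. unit_meas))"
    then have x: "x 0 \<in> {0..1}" "x 1 \<in> {0..1}"
      by (auto simp: space_PiM PiE_iff)
    let ?K = "\<lambda>i::nat. if i = 2 then G (x 0) (x 1) else H (x 0) (x 1)"
    have "(\<integral>y. ?F (merge {0, 1} {2, 3} (x, y)) \<partial>PiM {2, 3} (\<lambda>_. unit_meas))
        = (\<integral>y. h (x 0) (x 1) * (\<Prod>i\<in>{2, 3}. ?K i (y i)) \<partial>PiM {2, 3} (\<lambda>_. unit_meas))"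
      by (rule Bochner_Integration.integral_cong) (simp_all add: merge_def)
    also have "\<dots> = h (x 0) (x 1) * (\<Prod>i\<in>{2::nat, 3}. integral\<^sup>L unit_meas (?K i))"
      unfolding integral_mult_right_zero using sections[OF x]
      by (subst unit_meas.product_integral_prod) auto
    finally show "(\<integral>y. ?F (merge {0, 1} {2, 3} (x, y)) \<partial>PiM {2, 3} (\<lambda>_. unit_meas))
        = h (x 0) (x 1) * integral\<^sup>L unit_meas (G (x 0) (x 1)) * integral\<^sup>L unit_meas (H (x 0) (x 1))"
      by simp
  qed
  finally show ?thesis .
qed

lemma integral_unit_cube_fibre_square_nonneg:
  fixes h :: "real \<Rightarrow> real \<Rightarrow> real" and G :: "real \<Rightarrow> real \<Rightarrow> real \<Rightarrow> real"
  assumes "integrable (unit_cube 4) (\<lambda>x. h (x 0) (x 1) * G (x 0) (x 1) (x 2) * G (x 0) (x 1) (x 3))"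
    and "\<And>a b. a \<in> {0..1} \<Longrightarrow> b \<in> {0..1} \<Longrightarrow> integrable unit_meas (G a b)"
    and h: "\<And>a b. a \<in> {0..1} \<Longrightarrow> b \<in> {0..1} \<Longrightarrow> 0 \<le> h a b"
  shows "0 \<le> (\<integral>x. h (x 0) (x 1) * G (x 0) (x 1) (x 2) * G (x 0) (x 1) (x 3) \<partial>unit_cube 4)"
proof -
  have "0 \<le> (\<integral>x. h (x 0) (x 1) * integral\<^sup>L unit_meas (G (x 0) (x 1)) * integral\<^sup>L unit_meas (G (x 0) (x 1))
      \<partial>PiM {0::nat, 1} (\<lambda>_. unit_meas))"
    by (rule Bochner_Integration.integral_nonneg) (auto simp: space_PiM PiE_iff mult.assoc h)
  also have "\<dots> = (\<integral>x. h (x 0) (x 1) * G (x 0) (x 1) (x 2) * G (x 0) (x 1) (x 3) \<partial>unit_cube 4)"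
    by (rule integral_unit_cube_fibre[symmetric]) (use assms in auto)
  finally show ?thesis .
qed

lemma unit_cube_coord: "x \<in> space (unit_cube n) \<Longrightarrow> i < n \<Longrightarrow> x i \<in> {0..1}"
  by (auto simp: space_PiM PiE_iff)

lemma hom_density_empty: "hom_density n {} F = 1"
  using prob_space.prob_space[OF prob_space_unit_cube] by (simp add: hom_density_def)

definition centred :: "(real \<Rightarrow> real \<Rightarrow> real) \<Rightarrow> real \<Rightarrow> real \<Rightarrow> real" where
  "centred W x y = 2 * W x y - 1"

context
  fixes W :: "real \<Rightarrow> real \<Rightarrow> real"
  assumes W: "graphon W"
begin

lemma graphon_bounded_measurable:
  assumes "i < n" "j < n"
  shows "bounded_measurable (unit_cube n) (\<lambda>x. W (x i) (x j))"
proof -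
  have "(\<lambda>x. (x i, x j)) \<in> measurable (unit_cube n) (unit_meas \<Otimes>\<^sub>M unit_meas)"
    using assms by (auto intro!: measurable_Pair measurable_component_singleton)
  moreover have "(\<lambda>(x, y). W x y) \<in> borel_measurable (unit_meas \<Otimes>\<^sub>M unit_meas)"
    using W by (simp add: graphon_def unit_meas_def)
  ultimately have "(\<lambda>x. W (x i) (x j)) \<in> borel_measurable (unit_cube n)"
    by (rule measurable_compose[where f="\<lambda>x. (x i, x j)" and g="\<lambda>(x, y). W x y", simplified])
  moreover have "\<bar>W (x i) (x j)\<bar> \<le> 1" if "x \<in> space (unit_cube n)" for x
    using W that assms by (auto simp: graphon_def space_PiM PiE_iff)
  ultimately show ?thesis
    unfolding bounded_measurable_def by blast
qed

lemma centred_commute: "x \<in> {0..1} \<Longrightarrow> y \<in> {0..1} \<Longrightarrow> centred W x y = centred W y x"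
  using W by (simp add: graphon_def centred_def)

lemma abs_centred_le_one: "x \<in> {0..1} \<Longrightarrow> y \<in> {0..1} \<Longrightarrow> \<bar>centred W x y\<bar> \<le> 1"
  using W by (simp add: graphon_def centred_def abs_le_iff)

lemma centred_bounded_measurable:
  "i < n \<Longrightarrow> j < n \<Longrightarrow> bounded_measurable (unit_cube n) (\<lambda>x. centred W (x i) (x j))"
  unfolding centred_def by (simp add: graphon_bounded_measurable)

lemma centred_measurable: "(\<lambda>(x, y). centred W x y) \<in> borel_measurable (unit_meas \<Otimes>\<^sub>M unit_meas)"
proof -
  have "(\<lambda>(x, y). W x y) \<in> borel_measurable (unit_meas \<Otimes>\<^sub>M unit_meas)"
    using W by (simp add: graphon_def unit_meas_def)
  then have "(\<lambda>p. 2 * (\<lambda>(x, y). W x y) p - 1) \<in> borel_measurable (unit_meas \<Otimes>\<^sub>M unit_meas)"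
    by measurable
  then show ?thesis
    by (simp add: centred_def case_prod_beta)
qed

lemma bounded_measurable_centred_section:
  assumes "a \<in> {0..1}"
  shows "bounded_measurable unit_meas (\<lambda>y. centred W a y)"
  unfolding bounded_measurable_def
  using measurable_Pair2[OF centred_measurable, of a] abs_centred_le_one assms by (auto intro!: exI[of _ 1])

lemma integrable_centred_section: "a \<in> {0..1} \<Longrightarrow> integrable unit_meas (centred W a)"
  using integrable_bounded_measurable[OF finite_measure_unit_meas bounded_measurable_centred_section]
  by simp

lemma centred_commute_coord:
  "x \<in> space (unit_cube n) \<Longrightarrow> i < n \<Longrightarrow> j < n \<Longrightarrow> centred W (x i) (x j) = centred W (x j) (x i)"
  by (metis centred_commute unit_cube_coord)

lemma integrable_hom_integrand:
  assumes "E \<subseteq> {..<n} \<times> {..<n}"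
  shows "integrable (unit_cube n) (\<lambda>x. \<Prod>(u, v)\<in>E. centred W (x u) (x v))"
    and "integrable (unit_cube n) (\<lambda>x. \<Prod>(u, v)\<in>E. W (x u) (x v))"
    and "integrable (unit_cube n) (\<lambda>x. \<Prod>(u, v)\<in>E. 1 - W (x u) (x v))"
  using assms by (auto simp: case_prod_beta intro!: integrable_bounded_measurable
      finite_measure_unit_cube bounded_measurable_prod bounded_measurable_diff
      centred_bounded_measurable graphon_bounded_measurable)

lemma m_density_eq_even_subgraph_sum:
  assumes es: "distinct es" "set es \<subseteq> {..<n} \<times> {..<n}"
  shows "m_density n (set es) W
    = 2 / 2 ^ length es * (\<Sum>fs\<leftarrow>filter (even \<circ> length) (List.subseqs es). hom_density n (set fs) (centred W))"
proof -
  let ?S = "filter (even \<circ> length) (List.subseqs es)"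
  let ?U = "\<lambda>x (u, v). centred W (x u) (x v)"
  have sub: "distinct fs \<and> set fs \<subseteq> {..<n} \<times> {..<n}" if "fs \<in> set ?S" for fs
  proof -
    from that have fs: "fs \<in> set (List.subseqs es)"
      by (simp del: in_set_subseqs)
    have "set fs \<subseteq> set es"
      using subseqs_powset[of es] imageI[OF fs, of set] by simp
    then show ?thesis
      using subseqs_distinctD[OF fs es(1)] es(2) by simp
  qed
  have pointwise: "(\<Prod>(u, v)\<in>set es. W (x u) (x v)) + (\<Prod>(u, v)\<in>set es. 1 - W (x u) (x v))
      = 2 / 2 ^ length es * (\<Sum>i<length ?S. \<Prod>(u, v)\<in>set (?S ! i). centred W (x u) (x v))" for x
  proof -
    have half: "(\<Prod>e\<in>set es. g e / 2) = (\<Prod>e\<leftarrow>es. g e) / 2 ^ length es" for g :: "nat \<times> nat \<Rightarrow> real"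
      using es(1) by (simp add: prod_dividef prod.distinct_set_conv_list distinct_card)
    have "(\<Prod>(u, v)\<in>set es. W (x u) (x v)) = (\<Prod>e\<in>set es. (1 + ?U x e) / 2)"
      and "(\<Prod>(u, v)\<in>set es. 1 - W (x u) (x v)) = (\<Prod>e\<in>set es. (1 - ?U x e) / 2)"
      by (auto intro!: prod.cong simp: centred_def)
    then have "(\<Prod>(u, v)\<in>set es. W (x u) (x v)) + (\<Prod>(u, v)\<in>set es. 1 - W (x u) (x v))
      = (\<Prod>e\<leftarrow>es. 1 + ?U x e) / 2 ^ length es + (\<Prod>e\<leftarrow>es. 1 - ?U x e) / 2 ^ length es"
      by (simp only: half)
    also have "\<dots> = ((\<Prod>e\<leftarrow>es. 1 + ?U x e) + (\<Prod>e\<leftarrow>es. 1 - ?U x e)) / 2 ^ length es"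
      by (rule add_divide_distrib[symmetric])
    also have "\<dots> = 2 / 2 ^ length es * (\<Sum>fs\<leftarrow>?S. \<Prod>e\<leftarrow>fs. ?U x e)"
      unfolding prod_list_one_plus_add_one_minus by simp
    also have "(\<Sum>fs\<leftarrow>?S. \<Prod>e\<leftarrow>fs. ?U x e) = (\<Sum>i<length ?S. \<Prod>e\<in>set (?S ! i). ?U x e)"
      unfolding sum_list_sum_nth atLeast0LessThan
    proof (rule sum.cong, simp)
      fix i assume "i \<in> {..<length ?S}"
      then have i: "i < length ?S"
        by simp
      then have "distinct (?S ! i)"
        using sub nth_mem by blast
      with i show "map (\<lambda>fs. \<Prod>e\<leftarrow>fs. ?U x e) ?S ! i = (\<Prod>e\<in>set (?S ! i). ?U x e)"
        by (simp add: prod.distinct_set_conv_list)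
    qed
    finally show ?thesis .
  qed
  have "m_density n (set es) W
      = (\<integral>x. (\<Prod>(u, v)\<in>set es. W (x u) (x v)) + (\<Prod>(u, v)\<in>set es. 1 - W (x u) (x v)) \<partial>unit_cube n)"
    unfolding m_density_def hom_density_def
    by (rule Bochner_Integration.integral_add[symmetric]) (use es in \<open>simp_all add: integrable_hom_integrand\<close>)
  also have "\<dots> = (\<integral>x. 2 / 2 ^ length es * (\<Sum>i<length ?S. \<Prod>(u, v)\<in>set (?S ! i). centred W (x u) (x v)) \<partial>unit_cube n)"
    unfolding pointwise ..
  also have "\<dots> = 2 / 2 ^ length es * (\<Sum>i<length ?S. hom_density n (set (?S ! i)) (centred W))"
  proof -
    have "integrable (unit_cube n) (\<lambda>x. \<Prod>(u, v)\<in>set (?S ! i). centred W (x u) (x v))" if "i < length ?S" for i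
      using sub[OF nth_mem[OF that]] by (simp add: integrable_hom_integrand)
    then show ?thesis
      unfolding hom_density_def by (simp add: integral_sum)
  qed
  also have "\<dots> = 2 / 2 ^ length es * (\<Sum>fs\<leftarrow>?S. hom_density n (set fs) (centred W))"
    by (simp add: sum_list_sum_nth atLeast0LessThan)
  finally show ?thesis .
qed

lemma hom_density_centred_relabel:
  assumes xs: "distinct xs" "set xs = {..<n}" and E: "E \<subseteq> {..<n} \<times> {..<n}"
    and relabel: "\<And>x. x \<in> space (unit_cube n) \<Longrightarrow>
      (\<Prod>(u, v)\<in>E. centred W (x (xs ! u)) (x (xs ! v))) = (\<Prod>(u, v)\<in>E'. centred W (x u) (x v))"
  shows "hom_density n E (centred W) = hom_density n E' (centred W)"
proof -
  have "hom_density n E (centred W)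
      = (\<integral>x. (\<Prod>(u, v)\<in>E. centred W ((\<lambda>i\<in>{..<n}. x (xs ! i)) u) ((\<lambda>i\<in>{..<n}. x (xs ! i)) v)) \<partial>unit_cube n)"
    unfolding hom_density_def using xs E integrable_hom_integrand(1)[OF E]
    by (intro integral_PiM_relabel[symmetric] prob_space_unit_meas) auto
  also have "\<dots> = hom_density n E' (centred W)"
  proof -
    have "(\<Prod>(u, v)\<in>E. centred W ((\<lambda>i\<in>{..<n}. x (xs ! i)) u) ((\<lambda>i\<in>{..<n}. x (xs ! i)) v))
        = (\<Prod>(u, v)\<in>E. centred W (x (xs ! u)) (x (xs ! v)))" for x
      using E by (intro prod.cong) auto
    then show ?thesis
      unfolding hom_density_def using relabel by (intro Bochner_Integration.integral_cong) auto
  qed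
  finally show ?thesis .
qed

text \<open>In each relabelling below the list gives the images of the vertices 0, 1, 2, 3 of the
  right-hand graph, which is the representative of its isomorphism class.\<close>

lemma cherry_densities:
  shows "hom_density 4 {(0,1), (1,2)} (centred W) = hom_density 4 {(0,1), (0,2)} (centred W)"
    and "hom_density 4 {(0,1), (0,3)} (centred W) = hom_density 4 {(0,1), (0,2)} (centred W)"
    and "hom_density 4 {(1,2), (2,3)} (centred W) = hom_density 4 {(0,1), (0,2)} (centred W)"
    and "hom_density 4 {(1,2), (0,2)} (centred W) = hom_density 4 {(0,1), (0,2)} (centred W)"
    and "hom_density 4 {(2,3), (0,3)} (centred W) = hom_density 4 {(0,1), (0,2)} (centred W)"
    and "hom_density 4 {(2,3), (0,2)} (centred W) = hom_density 4 {(0,1), (0,2)} (centred W)"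
    and "hom_density 4 {(0,3), (0,2)} (centred W) = hom_density 4 {(0,1), (0,2)} (centred W)"
  subgoal by (rule hom_density_centred_relabel[symmetric, of "[1,0,2,3]"]) (auto simp: centred_commute_coord ac_simps)
  subgoal by (rule hom_density_centred_relabel[symmetric, of "[0,1,3,2]"]) (auto simp: centred_commute_coord ac_simps)
  subgoal by (rule hom_density_centred_relabel[symmetric, of "[2,1,3,0]"]) (auto simp: centred_commute_coord ac_simps)
  subgoal by (rule hom_density_centred_relabel[symmetric, of "[2,1,0,3]"]) (auto simp: centred_commute_coord ac_simps)
  subgoal by (rule hom_density_centred_relabel[symmetric, of "[3,2,0,1]"]) (auto simp: centred_commute_coord ac_simps)
  subgoal by (rule hom_density_centred_relabel[symmetric, of "[2,3,0,1]"]) (auto simp: centred_commute_coord ac_simps)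
  subgoal by (rule hom_density_centred_relabel[symmetric, of "[0,3,2,1]"]) (auto simp: centred_commute_coord ac_simps)
  done

lemma matching_densities:
  shows "hom_density 4 {(1,2), (0,3)} (centred W) = hom_density 4 {(0,1), (2,3)} (centred W)"
    and "hom_density 4 {(0,2), (1,3)} (centred W) = hom_density 4 {(0,1), (2,3)} (centred W)"
  subgoal by (rule hom_density_centred_relabel[symmetric, of "[1,2,0,3]"]) (auto simp: centred_commute_coord ac_simps)
  subgoal by (rule hom_density_centred_relabel[symmetric, of "[0,2,1,3]"]) (auto simp: centred_commute_coord ac_simps)
  done

lemma four_cycle_density:
  "hom_density 4 {(0,2), (1,2), (0,3), (1,3)} (centred W) = hom_density 4 C4_edges (centred W)"
  by (rule hom_density_centred_relabel[symmetric, of "[0,2,1,3]"])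
    (auto simp: C4_edges_def centred_commute_coord ac_simps)

lemma paw_densities:
  shows "hom_density 4 {(0,1), (1,2), (2,3), (0,2)} (centred W) = hom_density 4 {(0,1), (1,2), (0,3), (0,2)} (centred W)"
    and "hom_density 4 {(0,1), (2,3), (0,3), (0,2)} (centred W) = hom_density 4 {(0,1), (1,2), (0,3), (0,2)} (centred W)"
    and "hom_density 4 {(1,2), (2,3), (0,3), (0,2)} (centred W) = hom_density 4 {(0,1), (1,2), (0,3), (0,2)} (centred W)"
    and "hom_density 4 {(0,2), (1,2), (0,1), (0,3)} (centred W) = hom_density 4 {(0,1), (1,2), (0,3), (0,2)} (centred W)"
    and "hom_density 4 {(0,1), (0,2), (0,3), (1,3)} (centred W) = hom_density 4 {(0,1), (1,2), (0,3), (0,2)} (centred W)"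
  subgoal by (rule hom_density_centred_relabel[symmetric, of "[2,0,1,3]"]) (auto simp: centred_commute_coord ac_simps)
  subgoal by (rule hom_density_centred_relabel[symmetric, of "[0,2,3,1]"]) (auto simp: centred_commute_coord ac_simps)
  subgoal by (rule hom_density_centred_relabel[symmetric, of "[2,0,3,1]"]) (auto simp: centred_commute_coord ac_simps)
  subgoal by (rule hom_density_centred_relabel[symmetric, of "[0,1,2,3]"]) (auto simp: centred_commute_coord ac_simps)
  subgoal by (rule hom_density_centred_relabel[symmetric, of "[0,1,3,2]"]) (auto simp: centred_commute_coord ac_simps)
  done

lemma m_density_C4_expansion:
  "m_density 4 C4_edges W
    = (1 + 4 * hom_density 4 {(0,1), (0,2)} (centred W) + 2 * hom_density 4 {(0,1), (2,3)} (centred W)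
       + hom_density 4 C4_edges (centred W)) / 8"
  \<comment> \<open>Without deleting One_nat_def, simp turns the vertex 1 into Suc 0 before the relabelling
    identities can match.\<close>
  using m_density_eq_even_subgraph_sum[of "[(0,1), (1,2), (2,3), (0,3)]" 4]
  by (simp add: Let_def cherry_densities matching_densities(1) hom_density_empty C4_edges_def del: One_nat_def)

lemma m_density_diamond_expansion:
  "m_density 4 diamond_edges W
    = (1 + 8 * hom_density 4 {(0,1), (0,2)} (centred W) + 2 * hom_density 4 {(0,1), (2,3)} (centred W)
       + hom_density 4 C4_edges (centred W) + 4 * hom_density 4 {(0,1), (1,2), (0,3), (0,2)} (centred W)) / 16"
  using m_density_eq_even_subgraph_sum[of "[(0,1), (1,2), (2,3), (0,3), (0,2)]" 4]
  by (simp add: Let_def cherry_densities matching_densities(1) paw_densities hom_density_empty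
      C4_edges_def diamond_edges_def del: One_nat_def)

lemma cherry_density_eq_integral:
  "hom_density 4 {(0,1), (0,2)} (centred W) = (\<integral>x. centred W (x 0) (x 2) * centred W (x 0) (x 3) \<partial>unit_cube 4)"
  unfolding cherry_densities(7)[symmetric] by (simp add: hom_density_def mult.commute)

lemma cherry_density_nonneg: "0 \<le> hom_density 4 {(0,1), (0,2)} (centred W)"
proof -
  have "0 \<le> (\<integral>x. 1 * centred W (x 0) (x 2) * centred W (x 0) (x 3) \<partial>unit_cube 4)"
    by (rule integral_unit_cube_fibre_square_nonneg[where h = "\<lambda>_ _. 1" and G = "\<lambda>a _. centred W a"])
      (simp_all add: centred_bounded_measurable integrable_centred_section)
  then show ?thesis
    unfolding cherry_density_eq_integral by simp
qed

lemma matching_density_nonneg: "0 \<le> hom_density 4 {(0,1), (2,3)} (centred W)"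
proof -
  interpret unit_prob: prob_space unit_meas
    by (rule prob_space_unit_meas)
  define d where "d a = integral\<^sup>L unit_meas (centred W a)" for a
  have "d \<in> borel_measurable unit_meas"
    unfolding d_def using centred_measurable by measurable
  moreover have "\<bar>d a\<bar> \<le> 1" if "a \<in> {0..1}" for a
  proof -
    have "\<bar>d a\<bar> \<le> (\<integral>y. \<bar>centred W a y\<bar> \<partial>unit_meas)"
      unfolding d_def using integral_norm_bound[of unit_meas "centred W a"] by simp
    also have "\<dots> \<le> (\<integral>y. 1 \<partial>unit_meas)"
      using that abs_centred_le_one integrable_centred_section
      by (intro integral_mono) auto
    finally show ?thesis
      using unit_prob.prob_space by simp
  qed
  ultimately have d: "integrable unit_meas d"
    by (intro unit_prob.integrable_const_bound[where B = 1]) auto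
  have "hom_density 4 {(0,1), (2,3)} (centred W)
      = (\<integral>x. 1 * centred W (x 0) (x 2) * centred W (x 1) (x 3) \<partial>unit_cube 4)"
    unfolding matching_densities(2)[symmetric] by (simp add: hom_density_def)
  also have "\<dots> = (\<integral>x. 1 * d (x 0) * d (x 1) \<partial>PiM {0::nat, 1} (\<lambda>_. unit_meas))"
    unfolding d_def
    by (rule integral_unit_cube_fibre) (simp_all add: centred_bounded_measurable integrable_centred_section)
  also have "\<dots> = (\<integral>x. (\<Prod>i\<in>{0::nat, 1}. d (x i)) \<partial>PiM {0, 1} (\<lambda>_. unit_meas))"
    by simp
  also have "\<dots> = (integral\<^sup>L unit_meas d)\<^sup>2"
    using d by (subst unit_meas.product_integral_prod) (simp_all add: power2_eq_square)
  finally show ?thesis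
    by simp
qed

lemma doubled_star_le_cherry:
  "(\<integral>x. (centred W (x 0) (x 1))\<^sup>2 * centred W (x 0) (x 2) * centred W (x 0) (x 3) \<partial>unit_cube 4)
    \<le> hom_density 4 {(0,1), (0,2)} (centred W)"
proof -
  have "0 \<le> (\<integral>x. (1 - (centred W (x 0) (x 1))\<^sup>2) * centred W (x 0) (x 2) * centred W (x 0) (x 3) \<partial>unit_cube 4)"
  proof (rule integral_unit_cube_fibre_square_nonneg[where G = "\<lambda>a _. centred W a"])
    fix a b :: real assume "a \<in> {0..1}" "b \<in> {0..1}"
    then show "0 \<le> 1 - (centred W a b)\<^sup>2"
      using abs_centred_le_one abs_square_le_1 by (simp add: abs_square_le_1)
  qed (simp_all add: power2_eq_square centred_bounded_measurable integrable_centred_section)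
  also have "\<dots> = hom_density 4 {(0,1), (0,2)} (centred W)
      - (\<integral>x. (centred W (x 0) (x 1))\<^sup>2 * centred W (x 0) (x 2) * centred W (x 0) (x 3) \<partial>unit_cube 4)"
    unfolding cherry_density_eq_integral left_diff_distrib mult_1 mult.assoc
    by (rule Bochner_Integration.integral_diff) (simp_all add: power2_eq_square centred_bounded_measurable)
  finally show ?thesis
    by simp
qed

lemma four_cycle_paw_quadratic_form_nonneg:
  "0 \<le> \<alpha>\<^sup>2 * hom_density 4 C4_edges (centred W)
    + 2 * \<alpha> * \<beta> * hom_density 4 {(0,1), (1,2), (0,3), (0,2)} (centred W)
    + \<beta>\<^sup>2 * (\<integral>x. (centred W (x 0) (x 1))\<^sup>2 * centred W (x 0) (x 2) * centred W (x 0) (x 3) \<partial>unit_cube 4)"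
proof -
  define G where "G a b y = \<alpha> * (centred W a y * centred W b y) + \<beta> * (centred W a b * centred W a y)" for a b y
  have "0 \<le> (\<integral>x. 1 * G (x 0) (x 1) (x 2) * G (x 0) (x 1) (x 3) \<partial>unit_cube 4)"
    by (rule integral_unit_cube_fibre_square_nonneg)
      (simp_all add: G_def centred_bounded_measurable bounded_measurable_centred_section
        integrable_bounded_measurable[OF finite_measure_unit_meas])
  also have "\<dots> = \<alpha>\<^sup>2 * hom_density 4 {(0,2), (1,2), (0,3), (1,3)} (centred W)
    + \<alpha> * \<beta> * hom_density 4 {(0,2), (1,2), (0,1), (0,3)} (centred W)
    + \<alpha> * \<beta> * hom_density 4 {(0,1), (0,2), (0,3), (1,3)} (centred W)
    + \<beta>\<^sup>2 * (\<integral>x. (centred W (x 0) (x 1))\<^sup>2 * centred W (x 0) (x 2) * centred W (x 0) (x 3) \<partial>unit_cube 4)"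
    unfolding hom_density_def G_def
    by (simp add: algebra_simps power2_eq_square centred_bounded_measurable)
  finally show ?thesis
    unfolding four_cycle_density paw_densities(4,5) by (simp add: algebra_simps)
qed

end

lemma below_lower_root:
  fixes c :: real
  assumes "c \<le> (3 - sqrt 5) / 4"
  shows "c < 1/2" and "0 \<le> 4 * c\<^sup>2 - 6 * c + 1"
proof -
  have "1 < sqrt 5"
    by (simp add: real_less_rsqrt)
  moreover have "4 * c \<le> 3 - sqrt 5"
    using assms by simp
  ultimately show "c < 1/2"
    by linarith
  have "sqrt 5 \<le> 3 - 4 * c"
    using assms by simp
  then have "(sqrt 5)\<^sup>2 \<le> (3 - 4 * c)\<^sup>2"
    by (rule power_mono) simp
  then show "0 \<le> 4 * c\<^sup>2 - 6 * c + 1"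
    by (simp add: power2_eq_square algebra_simps)
qed

lemma diamond_C4_combination:
  fixes c P E Q T R :: real
  assumes c: "c < 1/2" "0 \<le> 4 * c\<^sup>2 - 6 * c + 1"
    and P: "0 \<le> P" and E: "0 \<le> E" and R: "R \<le> P"
    and form: "0 \<le> (1 - 2 * c)\<^sup>2 * Q + 2 * (1 - 2 * c) * 2 * T + 2\<^sup>2 * R"
  shows "c * ((1 + 4 * P + 2 * E + Q) / 8 - 1/8) \<le> (1 + 8 * P + 2 * E + Q + 4 * T) / 16 - 1/16"
proof -
  define s where "s = 1 - 2 * c"
  \<comment> \<open>After multiplication by s the deficit splits into four nonnegative terms.\<close>
  have "s * ((8 - 8 * c) * P + 2 * s * E + s * Q + 4 * T)
      = 4 * (4 * c\<^sup>2 - 6 * c + 1) * P + 2 * s\<^sup>2 * E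
        + ((1 - 2 * c)\<^sup>2 * Q + 2 * (1 - 2 * c) * 2 * T + 2\<^sup>2 * R) + 4 * (P - R)"
    by (simp add: s_def power2_eq_square algebra_simps)
  also have "\<dots> \<ge> 0"
  proof -
    have "0 \<le> 4 * (4 * c\<^sup>2 - 6 * c + 1) * P" "0 \<le> 2 * s\<^sup>2 * E" "0 \<le> 4 * (P - R)"
      using c(2) P E R by simp_all
    then show ?thesis
      using form by linarith
  qed
  finally have "0 \<le> (8 - 8 * c) * P + 2 * s * E + s * Q + 4 * T"
    using c(1) by (simp add: s_def zero_le_mult_iff)
  then show ?thesis
    by (simp add: s_def field_simps)
qed

theorem lemma4p2:
  fixes c :: real and W :: "real \<Rightarrow> real \<Rightarrow> real"
  assumes "0 \<le> c" and "c \<le> (3 - sqrt 5) / 4"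
    and "graphon W"
  shows "m_density 4 diamond_edges W - 1/16 \<ge> c * (m_density 4 C4_edges W - 1/8)"
  unfolding m_density_diamond_expansion[OF assms(3)] m_density_C4_expansion[OF assms(3)]
  by (rule diamond_C4_combination[OF below_lower_root[OF assms(2)] cherry_density_nonneg[OF assms(3)]
        matching_density_nonneg[OF assms(3)] doubled_star_le_cherry[OF assms(3)]
        four_cycle_paw_quadratic_form_nonneg[OF assms(3)]])

end
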